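(* There exist $p\in\mathcal P$ and $x\in N$ such that $D_{\mu(p)}(p)=D_{\mu(p^r)}(p^r)=\{x\}$ if and only if $(h,n)\notin T_1$, where $T_1=\{(h,n): h\le3\}\cup\{(h,n): n\le3\}\cup\{(4,4),(5,4),(7,4),(5,5)\}$.
   Context: Let $n,h\ge2$ be integers, $N=\{1,\dots,n\}$, $H=\{1,\dots,h\}$. $\mathcal P$ is the set of $h$-tuples $p=(p_1,\dots,p_h)$ of linear orders on $N$; $p^r$ is obtained by reversing each $p_i$; $x>_{p_i}y$ means $x\ne y$ and $p_i$ ranks $x$ above $y$. For an integer $\mu$ with $h/2<\mu\le h$, $D_\mu(p)=\{x\in N: \forall y\in N,\ |\{i: y>_{p_i}x\}|<\mu\}$, and $\mu(p)=\min\{\mu\in\mathbb N\cap(h/2,h]: D_\mu(p)\neq\varnothing\}$. *)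

theory Defs
  imports Main
begin

text \<open>A linear order on N = {1..n} is a relation r with linear_order_on {1..n} r;
  (x,y) \<in> r means that r ranks x at least as high as y.\<close>

definition profile :: "nat \<Rightarrow> nat \<Rightarrow> (nat \<Rightarrow> (nat \<times> nat) set) \<Rightarrow> bool" where
  "profile n h p \<longleftrightarrow> (\<forall>i\<in>{1..h}. linear_order_on {1..n} (p i))"

definition rev_profile :: "(nat \<Rightarrow> (nat \<times> nat) set) \<Rightarrow> (nat \<Rightarrow> (nat \<times> nat) set)" where
  "rev_profile p = (\<lambda>i. (p i)\<inverse>)"

definition above :: "(nat \<times> nat) set \<Rightarrow> nat \<Rightarrow> nat \<Rightarrow> bool" where
  "above r y x \<longleftrightarrow> y \<noteq> x \<and> (y, x) \<in> r"

definition Dmu :: "nat \<Rightarrow> nat \<Rightarrow> nat \<Rightarrow> (nat \<Rightarrow> (nat \<times> nat) set) \<Rightarrow> nat set" where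
  "Dmu n h m p = {x \<in> {1..n}. \<forall>y\<in>{1..n}. card {i \<in> {1..h}. above (p i) y x} < m}"

definition mu :: "nat \<Rightarrow> nat \<Rightarrow> (nat \<Rightarrow> (nat \<times> nat) set) \<Rightarrow> nat" where
  "mu n h p = (LEAST m. h < 2 * m \<and> m \<le> h \<and> Dmu n h m p \<noteq> {})"

definition T1 :: "(nat \<times> nat) set" where
  "T1 = {(h, n). h \<le> 3} \<union> {(h, n). n \<le> 3} \<union> {(4,4), (5,4), (7,4), (5,5)}"

end

theory Submission
  imports Defs
begin

text \<open>Write \<open>c(y, z)\<close> for the number of voters ranking \<open>y\<close> above \<open>z\<close>. For the least admissible
  \<open>\<mu>\<close> one has \<open>D\<^sub>\<mu>(p) = {x}\<close> exactly when every \<open>z \<noteq> x\<close> is beaten by some \<open>y\<close> with a strict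
  majority \<open>c(y, z)\<close> that exceeds every \<open>c(w, x)\<close>.

  If \<open>x\<close> wins in this sense both for \<open>p\<close> and for \<open>p\<^sup>r\<close>, then in one of the two profiles every
  alternative other than \<open>x\<close> beats another alternative other than \<open>x\<close> with at least
  \<open>\<lfloor>(h + 3) / 2\<rfloor>\<close> votes. Following these beats closes a cycle of some length \<open>k \<le> n - 1\<close>, and since
  no voter ranks every member of a cycle above its successor, the counts along the cycle add up to at
  most \<open>(k - 1) h\<close>. Hence \<open>(n - 1) \<lfloor>(h + 3) / 2\<rfloor> + h \<le> (n - 1) h\<close>, which fails on \<open>T\<^sub>1\<close>.

  Conversely, explicit profiles settle \<open>(n, h) \<in> {(4, 6), (4, 8), (4, 9), (5, 4), (5, 7), (6, 5)}\<close>.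
  Adding two voters with mutually reverse rankings raises \<open>h\<close> by two, and adding a clone of a
  losing alternative immediately below it raises \<open>n\<close> by one; both keep \<open>x\<close> the winner of the
  profile and of its reversal, and together they reach every pair outside \<open>T\<^sub>1\<close>.\<close>

section \<open>Vote counts and cycles\<close>

lemma card_eq_sum_of_bool: "finite A \<Longrightarrow> card {x \<in> A. P x} = (\<Sum>x\<in>A. of_bool (P x))"
  by (simp add: Collect_conj_eq Int_commute)

lemma finite_arg_max:
  fixes f :: "'a \<Rightarrow> nat"
  assumes "finite A" "A \<noteq> {}"
  obtains u where "u \<in> A" "\<forall>v\<in>A. f v \<le> f u"
proof -
  have "Max (f ` A) \<in> f ` A" using assms by simp
  then obtain u where "u \<in> A" "f u = Max (f ` A)" by auto
  with assms show thesis by (intro that) auto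
qed

lemma finite_range_repeats:
  fixes f :: "nat \<Rightarrow> 'a"
  assumes "finite Q" "\<And>k. f k \<in> Q"
  shows "\<exists>j. \<exists>i<j. f i = f j"
proof -
  have "\<not> inj_on f {..card Q}"
  proof
    assume "inj_on f {..card Q}"
    then have "card {..card Q} \<le> card Q" using card_inj_on_le[of f _ Q] assms by blast
    then show False by simp
  qed
  then obtain a b where ab: "a \<noteq> b" "f a = f b" unfolding inj_on_def by blast
  show ?thesis
  proof (cases "a < b")
    case True
    with ab show ?thesis by blast
  next
    case False
    with ab have "b < a" "f b = f a" by simp_all
    then show ?thesis by blast
  qed
qed

lemma cycle_at_first_repeat:
  fixes f :: "nat \<Rightarrow> 'a"
  assumes step: "\<And>k. E (f k) (f (Suc k))" and "\<exists>j. \<exists>i<j. f i = f j"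
  shows "\<exists>xs. distinct xs \<and> xs \<noteq> [] \<and> set xs \<subseteq> range f \<and>
           (\<forall>j<length xs. E (xs ! j) (xs ! (Suc j mod length xs)))"
proof -
  define j where "j = (LEAST j. \<exists>i<j. f i = f j)"
  have "\<exists>i<j. f i = f j" unfolding j_def using assms(2) by (rule LeastI_ex)
  then obtain i where i: "i < j" "f i = f j" by blast
  have least: "j \<le> j'" if "\<exists>i<j'. f i = f j'" for j'
    unfolding j_def using that by (rule Least_le)
  have inj: "inj_on f {..<j}"
  proof (rule inj_onI, rule ccontr)
    fix a b assume "a \<in> {..<j}" "b \<in> {..<j}" "f a = f b" "a \<noteq> b"
    then have "\<exists>i<max a b. f i = f (max a b)" by (auto simp: max_def nat_neq_iff)
    then have "j \<le> max a b" by (rule least)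
    with \<open>a \<in> {..<j}\<close> \<open>b \<in> {..<j}\<close> show False by simp
  qed
  define xs where "xs = map f [i..<j]"
  have len: "length xs = j - i" by (simp add: xs_def)
  have nth: "xs ! t = f (i + t)" if "t < j - i" for t using that by (simp add: xs_def)
  have "E (xs ! t) (xs ! (Suc t mod length xs))" if t: "t < length xs" for t
  proof -
    have "xs ! (Suc t mod length xs) = f (Suc (i + t))"
    proof (cases "Suc t < j - i")
      case True
      then show ?thesis using nth[OF True] len by simp
    next
      case False
      then have "Suc t = j - i" using t len by simp
      then have "Suc t mod length xs = 0" "j = Suc (i + t)" using len i(1) by simp_all
      then show ?thesis using nth[of 0] i by simp
    qed
    then show ?thesis using t len nth step by simp
  qed
  moreover have "distinct xs"
    using inj_on_subset[OF inj, of "{i..<j}"] by (simp add: xs_def distinct_map subset_iff)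
  moreover have "xs \<noteq> []" "set xs \<subseteq> range f" using i by (auto simp: xs_def)
  ultimately show ?thesis by blast
qed

lemma finite_cycle_if_successors:
  assumes "finite Q" "Q \<noteq> {}" and succ: "\<forall>z\<in>Q. \<exists>y\<in>Q. E z y"
  shows "\<exists>xs. distinct xs \<and> xs \<noteq> [] \<and> set xs \<subseteq> Q \<and>
           (\<forall>j<length xs. E (xs ! j) (xs ! (Suc j mod length xs)))"
proof -
  have "\<forall>z\<in>Q. \<exists>y. y \<in> Q \<and> E z y" using succ by blast
  then obtain s where s: "\<forall>z\<in>Q. s z \<in> Q \<and> E z (s z)" by (metis bchoice)
  obtain z0 where "z0 \<in> Q" using assms(2) by blast
  define f where "f k = (s ^^ k) z0" for k
  have fQ: "f k \<in> Q" for k by (induction k) (use \<open>z0 \<in> Q\<close> s in \<open>auto simp: f_def\<close>)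
  have step: "E (f k) (f (Suc k))" for k using s fQ[of k] by (simp add: f_def)
  have "\<exists>j. \<exists>i<j. f i = f j" using finite_range_repeats[OF assms(1) fQ] .
  from cycle_at_first_repeat[of E f, OF step this] fQ show ?thesis by blast
qed

definition votes :: "nat \<Rightarrow> (nat \<Rightarrow> (nat \<times> nat) set) \<Rightarrow> nat \<Rightarrow> nat \<Rightarrow> nat" where
  "votes h p y z = card {i \<in> {1..h}. above (p i) y z}"

lemma votes_le: "votes h p y z \<le> h"
proof -
  have "votes h p y z \<le> card {1..h}" unfolding votes_def by (rule card_mono) auto
  then show ?thesis by simp
qed

lemma votes_rev_profile: "votes h (rev_profile p) = (\<lambda>y z. votes h p z y)"
  unfolding votes_def above_def rev_profile_def by (intro ext arg_cong[where f = card]) auto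

lemma profile_rev_profile: "profile n h p \<Longrightarrow> profile n h (rev_profile p)"
  by (simp add: profile_def rev_profile_def)

lemma above_flip:
  assumes "linear_order_on A r" "y \<in> A" "z \<in> A" "y \<noteq> z"
  shows "above r z y \<longleftrightarrow> \<not> above r y z"
  using assms unfolding linear_order_on_def partial_order_on_def total_on_def antisym_def above_def
  by blast

lemma votes_add_votes_swap:
  assumes p: "profile n h p" and "y \<in> {1..n}" "z \<in> {1..n}" "y \<noteq> z"
  shows "votes h p y z + votes h p z y = h"
proof -
  let ?A = "{i \<in> {1..h}. above (p i) y z}"
  have flip: "above (p i) z y \<longleftrightarrow> \<not> above (p i) y z" if "i \<in> {1..h}" for i
    using p that assms(2-4) by (intro above_flip) (auto simp: profile_def)
  have "{i \<in> {1..h}. above (p i) z y} = {1..h} - ?A" by (auto simp: flip)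
  moreover have "card ({1..h} - ?A) = card {1..h} - card ?A" by (rule card_Diff_subset) auto
  ultimately have "votes h p z y = h - votes h p y z" by (simp add: votes_def)
  then show ?thesis using votes_le[of h p y z] by simp
qed

lemma linear_order_no_cycle:
  assumes lin: "linear_order_on A r" and xs: "distinct xs" "xs \<noteq> []" "set xs \<subseteq> A"
  shows "\<exists>j<length xs. \<not> above r (xs ! j) (xs ! (Suc j mod length xs))"
proof (rule ccontr)
  define k where "k = length xs"
  assume "\<not> ?thesis"
  then have edge: "above r (xs ! j) (xs ! (Suc j mod k))" if "j < k" for j
    using that by (auto simp: k_def)
  have refl: "refl_on A r" and tr: "trans r" and anti: "antisym r"
    using lin by (auto simp: linear_order_on_def partial_order_on_def preorder_on_def)
  have k: "0 < k" using xs(2) by (simp add: k_def)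
  have chain: "(xs ! 0, xs ! j) \<in> r" if "j < k" for j
    using that
  proof (induction j)
    case 0
    have "xs ! 0 \<in> A" using xs(2,3) nth_mem by fastforce
    then show ?case using refl by (simp add: refl_on_def)
  next
    case (Suc j)
    then have "(xs ! j, xs ! Suc j) \<in> r" using edge[of j] by (simp add: above_def)
    with Suc show ?case using tr by (meson Suc_lessD transE)
  qed
  have "(xs ! (k - 1), xs ! 0) \<in> r" "xs ! (k - 1) \<noteq> xs ! 0"
    using edge[of "k - 1"] k by (auto simp: above_def)
  moreover have "(xs ! 0, xs ! (k - 1)) \<in> r" using chain k by simp
  ultimately show False using anti by (auto dest: antisymD)
qed

lemma cycle_votes_le:
  assumes p: "profile n h p" and xs: "distinct xs" "xs \<noteq> []" "set xs \<subseteq> {1..n}"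
  shows "(\<Sum>j<length xs. votes h p (xs ! j) (xs ! (Suc j mod length xs))) \<le> (length xs - 1) * h"
proof -
  define k where "k = length xs"
  define P where "P i j \<longleftrightarrow> above (p i) (xs ! j) (xs ! (Suc j mod k))" for i j
  have voter: "card {j \<in> {..<k}. P i j} \<le> k - 1" if "i \<in> {1..h}" for i
  proof -
    have "linear_order_on {1..n} (p i)" using p that by (simp add: profile_def)
    from linear_order_no_cycle[OF this xs] obtain j where "j < k" "\<not> P i j"
      unfolding P_def k_def by blast
    then have "{j \<in> {..<k}. P i j} \<subset> {..<k}" by blast
    then have "card {j \<in> {..<k}. P i j} < k" using psubset_card_mono[of "{..<k}"] by simp
    then show ?thesis by simp
  qed
  have "(\<Sum>j<k. votes h p (xs ! j) (xs ! (Suc j mod k))) = (\<Sum>j<k. \<Sum>i\<in>{1..h}. of_bool (P i j))"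
    by (simp only: votes_def P_def card_eq_sum_of_bool[OF finite_atLeastAtMost])
  also have "\<dots> = (\<Sum>i\<in>{1..h}. card {j \<in> {..<k}. P i j})"
    by (subst sum.swap) (simp only: card_eq_sum_of_bool[OF finite_lessThan])
  also have "\<dots> \<le> (\<Sum>i\<in>{1..h}. k - 1)" by (rule sum_mono) (rule voter)
  finally show ?thesis by (simp add: k_def mult.commute)
qed

lemma card_bound_if_each_beats:
  assumes p: "profile n h p" and Q: "Q \<subseteq> {1..n}" "Q \<noteq> {}"
    and succ: "\<forall>z\<in>Q. \<exists>y\<in>Q. w \<le> votes h p z y"
  shows "card Q * w + h \<le> card Q * h"
proof -
  have "finite Q" using Q(1) finite_subset by blast
  then obtain xs where xs: "distinct xs" "xs \<noteq> []" "set xs \<subseteq> Q"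
    and edge: "\<forall>j<length xs. w \<le> votes h p (xs ! j) (xs ! (Suc j mod length xs))"
    using finite_cycle_if_successors[OF _ Q(2) succ] by blast
  define k where "k = length xs"
  have "k * w = (\<Sum>j<k. w)" by simp
  also have "\<dots> \<le> (\<Sum>j<k. votes h p (xs ! j) (xs ! (Suc j mod k)))"
    using edge by (intro sum_mono) (simp add: k_def)
  also have "\<dots> \<le> (k - 1) * h"
    using cycle_votes_le[OF p xs(1,2)] xs(3) Q(1) by (simp add: k_def)
  finally have "k * w \<le> (k - 1) * h" .
  moreover have "k * h = (k - 1) * h + h" using xs(2) by (cases k) (simp_all add: k_def)
  ultimately have cyc: "k * w + h \<le> k * h" by simp
  have "k \<le> card Q" using distinct_card[OF xs(1)] card_mono[OF \<open>finite Q\<close> xs(3)] by (simp add: k_def)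
  then obtain r where q: "card Q = k + r" using le_Suc_ex by blast
  have "w \<le> h" using succ Q(2) votes_le order_trans by blast
  have "card Q * w + h = (k * w + h) + r * w" by (simp add: q algebra_simps)
  also have "\<dots> \<le> k * h + r * h" using cyc \<open>w \<le> h\<close> by (intro add_mono) simp_all
  also have "\<dots> = card Q * h" by (simp add: q algebra_simps)
  finally show ?thesis .
qed

section \<open>Winners of the \<open>\<mu>\<close>-rule\<close>

text \<open>\<open>c y z\<close> stands for the number of voters ranking \<open>y\<close> above \<open>z\<close>.\<close>

definition mu_winner :: "nat \<Rightarrow> nat \<Rightarrow> (nat \<Rightarrow> nat \<Rightarrow> nat) \<Rightarrow> nat \<Rightarrow> bool" where
  "mu_winner n h c x \<longleftrightarrow>
     (\<forall>z\<in>{1..n}. z \<noteq> x \<longrightarrow>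
        (\<exists>y\<in>{1..n}. h < 2 * c y z \<and> (\<forall>w\<in>{1..n}. c w x < c y z)))"

lemma Dmu_votes: "Dmu n h m p = {x \<in> {1..n}. \<forall>y\<in>{1..n}. votes h p y x < m}"
  by (simp add: Dmu_def votes_def)

text \<open>Unanimous beats cannot close a cycle, so some alternative is not beaten unanimously.\<close>

lemma Dmu_self_nonempty:
  assumes p: "profile n h p" and "1 \<le> h" "1 \<le> n"
  shows "Dmu n h h p \<noteq> {}"
proof
  assume "Dmu n h h p = {}"
  then have "\<forall>z\<in>{1..n}. \<exists>y\<in>{1..n}. h \<le> votes h (rev_profile p) z y"
    by (auto simp: Dmu_votes votes_rev_profile not_less)
  from card_bound_if_each_beats[OF profile_rev_profile[OF p] _ _ this] assms(2,3) show False
    by simp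
qed

lemma Dmu_mu_eq_singleton_iff:
  assumes p: "profile n h p" and "1 \<le> h" "1 \<le> n" and x: "x \<in> {1..n}"
  shows "Dmu n h (mu n h p) p = {x} \<longleftrightarrow> mu_winner n h (votes h p) x"
proof -
  define P where "P m \<longleftrightarrow> h < 2 * m \<and> m \<le> h \<and> Dmu n h m p \<noteq> {}" for m
  have "P h" using Dmu_self_nonempty[OF assms(1-3)] \<open>1 \<le> h\<close> by (simp add: P_def)
  then have Pmu: "P (mu n h p)" and mu_le: "\<And>m. P m \<Longrightarrow> mu n h p \<le> m"
    unfolding mu_def P_def[symmetric] by (auto intro: LeastI Least_le)
  show ?thesis
  proof
    assume D: "Dmu n h (mu n h p) p = {x}"
    show "mu_winner n h (votes h p) x" unfolding mu_winner_def
    proof (intro ballI impI)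
      fix z assume "z \<in> {1..n}" "z \<noteq> x"
      then have "z \<in> {1..n} - Dmu n h (mu n h p) p" using D by blast
      then obtain y where "y \<in> {1..n}" "mu n h p \<le> votes h p y z"
        by (auto simp: Dmu_votes not_less)
      moreover have "\<forall>w\<in>{1..n}. votes h p w x < mu n h p" using D by (auto simp: Dmu_votes)
      ultimately show "\<exists>y\<in>{1..n}. h < 2 * votes h p y z \<and> (\<forall>w\<in>{1..n}. votes h p w x < votes h p y z)"
        using Pmu by (force simp: P_def)
    qed
  next
    assume W: "mu_winner n h (votes h p) x"
    have "z \<notin> Dmu n h (mu n h p) p" if z: "z \<in> {1..n} - {x}" for z
    proof
      assume "z \<in> Dmu n h (mu n h p) p"
      moreover obtain y where y: "y \<in> {1..n}" "h < 2 * votes h p y z"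
        "\<forall>w\<in>{1..n}. votes h p w x < votes h p y z"
        using W z unfolding mu_winner_def by blast
      ultimately have "votes h p y z < mu n h p" by (simp add: Dmu_votes)
      moreover have "P (votes h p y z)" using y x votes_le by (auto simp: P_def Dmu_votes)
      ultimately show False using mu_le by fastforce
    qed
    moreover have "Dmu n h (mu n h p) p \<noteq> {}" "Dmu n h (mu n h p) p \<subseteq> {1..n}"
      using Pmu by (auto simp: P_def Dmu_def)
    ultimately show "Dmu n h (mu n h p) p = {x}" by blast
  qed
qed

section \<open>Necessity\<close>

definition dominated :: "nat \<Rightarrow> nat \<Rightarrow> (nat \<Rightarrow> nat \<Rightarrow> nat) \<Rightarrow> nat \<Rightarrow> bool" where
  "dominated n h c x \<longleftrightarrow> (\<exists>u\<in>{1..n}. h \<le> 2 * c u x \<and> (\<forall>z\<in>{1..n}. c x z \<le> c u x))"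

text \<open>\<open>(h + 3) div 2\<close> is the least \<open>k\<close> with \<open>h + 2 \<le> 2 k\<close>.\<close>

lemma beaten_within_if_dominated_mu_winner:
  assumes "mu_winner n h c x" "dominated n h c x"
  shows "\<forall>z\<in>{1..n} - {x}. \<exists>y\<in>{1..n} - {x}. (h + 3) div 2 \<le> c y z"
proof
  fix z assume z: "z \<in> {1..n} - {x}"
  obtain y where y: "y \<in> {1..n}" "\<forall>w\<in>{1..n}. c w x < c y z"
    using assms(1) z unfolding mu_winner_def by blast
  obtain u where u: "u \<in> {1..n}" "h \<le> 2 * c u x" "\<forall>z\<in>{1..n}. c x z \<le> c u x"
    using assms(2) by (auto simp: dominated_def)
  have "c u x < c y z" using y u by blast
  then have "y \<noteq> x" using u(3) z by fastforce
  moreover have "(h + 3) div 2 \<le> c y z" using \<open>c u x < c y z\<close> u(2) by presburger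
  ultimately show "\<exists>y\<in>{1..n} - {x}. (h + 3) div 2 \<le> c y z" using y(1) by blast
qed

lemma dominated_or_dominated_transpose:
  assumes comp: "\<And>y z. y \<in> {1..n} \<Longrightarrow> z \<in> {1..n} \<Longrightarrow> y \<noteq> z \<Longrightarrow> c y z + c z y = h"
    and x: "x \<in> {1..n}" and "2 \<le> n"
  shows "dominated n h c x \<or> dominated n h (\<lambda>y z. c z y) x"
proof (rule disjCI)
  assume nd: "\<not> dominated n h (\<lambda>y z. c z y) x"
  define z1 where "z1 = (if x = 1 then 2 else 1 :: nat)"
  have z1: "z1 \<in> {1..n}" "z1 \<noteq> x" using \<open>2 \<le> n\<close> x by (auto simp: z1_def)
  obtain u where u: "u \<in> {1..n}" "\<forall>v\<in>{1..n}. c x v \<le> c x u"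
    using finite_arg_max[OF finite_atLeastAtMost, of 1 n "c x"] x by blast
  show "dominated n h c x" unfolding dominated_def
  proof (cases "\<forall>z\<in>{1..n}. c z x \<le> c x u")
    case True
    then have "\<not> h \<le> 2 * c x u" using nd u(1) unfolding dominated_def by blast
    then have "2 * c x u < h" by simp
    moreover have "c x z1 + c z1 x = h" using comp x z1 by blast
    ultimately have "h \<le> 2 * c z1 x" using u(2) z1(1) by fastforce
    moreover have "\<forall>z\<in>{1..n}. c x z \<le> c z1 x"
    proof
      fix z assume "z \<in> {1..n}"
      then have "c x z \<le> c x u" using u(2) by blast
      then show "c x z \<le> c z1 x" using \<open>2 * c x u < h\<close> \<open>h \<le> 2 * c z1 x\<close> by linarith
    qed
    ultimately show "\<exists>u\<in>{1..n}. h \<le> 2 * c u x \<and> (\<forall>z\<in>{1..n}. c x z \<le> c u x)"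
      using z1 by blast
  next
    case False
    then obtain v where v: "v \<in> {1..n}" "c x u < c v x" by (auto simp: not_le)
    have "v \<noteq> x" using v u by fastforce
    then have "c x v + c v x = h" using comp x v(1) by blast
    then have "h \<le> 2 * c v x" "\<forall>z\<in>{1..n}. c x z \<le> c v x" using u v by fastforce+
    then show "\<exists>u\<in>{1..n}. h \<le> 2 * c u x \<and> (\<forall>z\<in>{1..n}. c x z \<le> c u x)" using v by blast
  qed
qed

lemma bound_if_mu_winner_both_ways:
  assumes p: "profile n h p" and x: "x \<in> {1..n}" and "2 \<le> n"
    and W: "mu_winner n h (votes h p) x" and W_rev: "mu_winner n h (votes h (rev_profile p)) x"
  shows "(n - 1) * ((h + 3) div 2) + h \<le> (n - 1) * h"
proof -
  let ?Q = "{1..n} - {x}"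
  have Q: "?Q \<subseteq> {1..n}" "card ?Q = n - 1" using x by (auto simp: card_Diff_singleton)
  with \<open>2 \<le> n\<close> have "0 < card ?Q" by simp
  then have "?Q \<noteq> {}" using card_gt_0_iff by blast
  have bound: "(n - 1) * ((h + 3) div 2) + h \<le> (n - 1) * h"
    if "profile n h q" "\<forall>z\<in>?Q. \<exists>y\<in>?Q. (h + 3) div 2 \<le> votes h q z y" for q
    using card_bound_if_each_beats[OF that(1) Q(1) \<open>?Q \<noteq> {}\<close> that(2)] by (simp only: Q(2))
  have "dominated n h (votes h p) x \<or> dominated n h (votes h (rev_profile p)) x"
    using dominated_or_dominated_transpose[OF votes_add_votes_swap[OF p] x \<open>2 \<le> n\<close>]
    by (simp add: votes_rev_profile)
  then show ?thesis
  proof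
    assume "dominated n h (votes h p) x"
    from beaten_within_if_dominated_mu_winner[OF W this] show ?thesis
      by (intro bound[OF profile_rev_profile[OF p]]) (simp add: votes_rev_profile)
  next
    assume "dominated n h (votes h (rev_profile p)) x"
    from beaten_within_if_dominated_mu_winner[OF W_rev this] show ?thesis
      by (intro bound[OF p]) (simp add: votes_rev_profile)
  qed
qed

lemma not_T1_if_bound:
  assumes "2 \<le> n" "2 \<le> h" and bound: "(n - 1) * ((h + 3) div 2) + h \<le> (n - 1) * h"
  shows "(h, n) \<notin> T1"
proof
  assume "(h, n) \<in> T1"
  then have "h \<le> 3 \<or> n \<le> 3 \<or> (h, n) \<in> {(4, 4), (5, 4), (7, 4), (5, 5)}"
    by (auto simp: T1_def)
  then show False
  proof (elim disjE)
    assume "h \<le> 3"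
    then have "h = 2 \<or> h = 3" using assms(2) by arith
    then show False using bound by auto
  next
    assume "n \<le> 3"
    then have "n = 2 \<or> n = 3" using assms(1) by arith
    then show False using bound by auto
  qed (use bound in auto)
qed

section \<open>Sufficiency\<close>

text \<open>Profiles are built from rank vectors: \<open>F i a\<close> is the position of \<open>a\<close> in the ranking of voter
  \<open>i\<close>, smaller meaning better.\<close>

definition rank_order :: "nat \<Rightarrow> (nat \<Rightarrow> nat) \<Rightarrow> (nat \<times> nat) set" where
  "rank_order n f = {(a, b). a \<in> {1..n} \<and> b \<in> {1..n} \<and> f a \<le> f b}"

lemma linear_order_rank_order:
  assumes inj: "inj_on f {1..n}" shows "linear_order_on {1..n} (rank_order n f)"
proof -
  have "rank_order n f \<subseteq> {1..n} \<times> {1..n}" unfolding rank_order_def by blast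
  moreover have "refl_on {1..n} (rank_order n f)" unfolding refl_on_def rank_order_def by blast
  moreover have "trans (rank_order n f)" unfolding trans_def rank_order_def by (blast intro: order_trans)
  moreover have "antisym (rank_order n f)"
    using inj unfolding antisym_def rank_order_def inj_on_def by (blast intro: le_antisym)
  moreover have "total_on {1..n} (rank_order n f)"
    unfolding total_on_def rank_order_def by (auto simp: nat_le_linear)
  ultimately show ?thesis unfolding linear_order_on_def partial_order_on_def preorder_on_def by blast
qed

lemma above_rank_order:
  assumes "inj_on f {1..n}" "a \<in> {1..n}" "b \<in> {1..n}"
  shows "above (rank_order n f) a b \<longleftrightarrow> f a < f b"
proof -
  have "f a = f b \<longleftrightarrow> a = b" using assms inj_on_eq_iff by metis
  then show ?thesis using assms(2,3) by (auto simp: above_def rank_order_def)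
qed

definition rank_votes :: "(nat \<Rightarrow> nat \<Rightarrow> nat) \<Rightarrow> nat \<Rightarrow> nat \<Rightarrow> nat \<Rightarrow> nat" where
  "rank_votes F h y z = card {i \<in> {1..h}. F i y < F i z}"

lemma votes_rank_order:
  assumes "\<forall>i\<in>{1..h}. inj_on (F i) {1..n}" "y \<in> {1..n}" "z \<in> {1..n}"
  shows "votes h (\<lambda>i. rank_order n (F i)) y z = rank_votes F h y z"
proof -
  have "{i \<in> {1..h}. above (rank_order n (F i)) y z} = {i \<in> {1..h}. F i y < F i z}"
    using above_rank_order assms by blast
  then show ?thesis by (simp add: votes_def rank_votes_def)
qed

lemma rank_votes_le: "rank_votes F h y z \<le> h"
proof -
  have "rank_votes F h y z \<le> card {1..h}" unfolding rank_votes_def by (rule card_mono) auto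
  then show ?thesis by simp
qed

lemma rank_votes_self [simp]: "rank_votes F h y y = 0"
  by (simp add: rank_votes_def)

lemma mu_winner_transfer:
  assumes W: "mu_winner n h c x" and x: "x \<in> {1..n}"
    and eq: "\<forall>y\<in>{1..n}. \<forall>z\<in>{1..n}. c' y z = c y z"
  shows "mu_winner n h c' x"
  unfolding mu_winner_def
proof (intro ballI impI)
  fix z assume z: "z \<in> {1..n}" "z \<noteq> x"
  then obtain y where y: "y \<in> {1..n}" "h < 2 * c y z" "\<forall>w\<in>{1..n}. c w x < c y z"
    using W unfolding mu_winner_def by blast
  then show "\<exists>y\<in>{1..n}. h < 2 * c' y z \<and> (\<forall>w\<in>{1..n}. c' w x < c' y z)"
    using x z eq by (intro bexI[OF _ y(1)]) auto
qed

definition realizable :: "nat \<Rightarrow> nat \<Rightarrow> bool" where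
  "realizable n h \<longleftrightarrow> (\<exists>F x. (\<forall>i\<in>{1..h}. inj_on (F i) {1..n}) \<and> x \<in> {1..n} \<and>
      mu_winner n h (rank_votes F h) x \<and> mu_winner n h (\<lambda>y z. rank_votes F h z y) x)"

lemma realizable_imp_profile:
  assumes "realizable n h"
  obtains p x where "profile n h p" "x \<in> {1..n}"
    "mu_winner n h (votes h p) x" "mu_winner n h (votes h (rev_profile p)) x"
proof -
  obtain F x where F: "\<forall>i\<in>{1..h}. inj_on (F i) {1..n}" "x \<in> {1..n}"
    "mu_winner n h (rank_votes F h) x" "mu_winner n h (\<lambda>y z. rank_votes F h z y) x"
    using assms unfolding realizable_def by blast
  let ?p = "\<lambda>i. rank_order n (F i)"
  have "profile n h ?p" unfolding profile_def using F(1) linear_order_rank_order by blast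
  have eq: "\<forall>y\<in>{1..n}. \<forall>z\<in>{1..n}. votes h ?p y z = rank_votes F h y z"
    using votes_rank_order[OF F(1)] by blast
  then have eq_rev: "\<forall>y\<in>{1..n}. \<forall>z\<in>{1..n}. votes h (rev_profile ?p) y z = rank_votes F h z y"
    by (simp add: votes_rev_profile)
  show ?thesis
  proof (rule that)
    show "mu_winner n h (votes h ?p) x" by (rule mu_winner_transfer[OF F(3) F(2) eq])
    show "mu_winner n h (votes h (rev_profile ?p)) x"
      by (rule mu_winner_transfer[OF F(4) F(2) eq_rev])
  qed fact+
qed

lemma mu_winner_add_opposite_voters:
  assumes W: "mu_winner n h c x" and x: "x \<in> {1..n}" and refl: "\<And>y. c y y = 0"
    and c': "\<forall>y\<in>{1..n}. \<forall>z\<in>{1..n}. c' y z = (if y = z then 0 else c y z + 1)"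
  shows "mu_winner n (h + 2) c' x"
  unfolding mu_winner_def
proof (intro ballI impI)
  fix z assume z: "z \<in> {1..n}" "z \<noteq> x"
  obtain y where y: "y \<in> {1..n}" "h < 2 * c y z" "\<forall>w\<in>{1..n}. c w x < c y z"
    using W z unfolding mu_winner_def by blast
  have "y \<noteq> z" using y(2) refl by auto
  then have "h + 2 < 2 * c' y z" "\<forall>w\<in>{1..n}. c' w x < c' y z"
    using y z x c' refl by auto
  then show "\<exists>y\<in>{1..n}. h + 2 < 2 * c' y z \<and> (\<forall>w\<in>{1..n}. c' w x < c' y z)" using y(1) by blast
qed

definition add_opposite_voters :: "nat \<Rightarrow> nat \<Rightarrow> (nat \<Rightarrow> nat \<Rightarrow> nat) \<Rightarrow> nat \<Rightarrow> nat \<Rightarrow> nat" where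
  "add_opposite_voters n h F = (\<lambda>i. if i = h + 1 then (\<lambda>a. a) else if i = h + 2 then (\<lambda>a. n - a) else F i)"

lemma rank_votes_add_opposite_voters:
  assumes "y \<in> {1..n}" "z \<in> {1..n}"
  shows "rank_votes (add_opposite_voters n h F) (h + 2) y z = (if y = z then 0 else rank_votes F h y z + 1)"
proof (cases "y = z")
  case False
  let ?F' = "add_opposite_voters n h F"
  have split: "{i \<in> {1..h + 2}. ?F' i y < ?F' i z} =
      {i \<in> {1..h}. F i y < F i z} \<union> {i \<in> {h + 1, h + 2}. ?F' i y < ?F' i z}"
    by (auto simp: add_opposite_voters_def)
  have "{i \<in> {h + 1, h + 2}. ?F' i y < ?F' i z} = (if y < z then {h + 1} else {h + 2})"
    using assms False by (auto simp: add_opposite_voters_def)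
  then have "card {i \<in> {h + 1, h + 2}. ?F' i y < ?F' i z} = 1" by simp
  with False show ?thesis
    unfolding rank_votes_def split by (subst card_Un_disjoint) auto
qed simp

lemma realizable_add_two_voters:
  assumes "realizable n h" shows "realizable n (h + 2)"
proof -
  obtain F x where F: "\<forall>i\<in>{1..h}. inj_on (F i) {1..n}" "x \<in> {1..n}"
    "mu_winner n h (rank_votes F h) x" "mu_winner n h (\<lambda>y z. rank_votes F h z y) x"
    using assms unfolding realizable_def by blast
  let ?F' = "add_opposite_voters n h F"
  have "inj_on (?F' i) {1..n}" if "i \<in> {1..h + 2}" for i
  proof (cases "i = h + 1 \<or> i = h + 2")
    case True
    then show ?thesis by (auto simp: add_opposite_voters_def inj_on_def)
  next
    case False
    with that have "i \<in> {1..h}" by auto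
    with False F(1) show ?thesis by (simp add: add_opposite_voters_def)
  qed
  then have "\<forall>i\<in>{1..h + 2}. inj_on (?F' i) {1..n}" by blast
  moreover have "mu_winner n (h + 2) (rank_votes ?F' (h + 2)) x"
    by (rule mu_winner_add_opposite_voters[OF F(3) F(2)])
      (simp, intro ballI, subst rank_votes_add_opposite_voters, simp_all)
  moreover have "mu_winner n (h + 2) (\<lambda>y z. rank_votes ?F' (h + 2) z y) x"
    by (rule mu_winner_add_opposite_voters[OF F(4) F(2)])
      (simp, intro ballI, subst rank_votes_add_opposite_voters, auto)
  ultimately show ?thesis using F(2) unfolding realizable_def by blast
qed

lemma mu_winner_add_clone:
  assumes W: "mu_winner n h c x" and x: "x \<in> {1..n}" and w: "w \<in> {1..n} - {x}"
    and old: "\<forall>a\<in>{1..n}. \<forall>b\<in>{1..n}. c' a b = c a b"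
    and clone: "\<forall>b\<in>{1..n}. c' (Suc n) b = c w b" "c' w (Suc n) = h"
    and le: "\<And>a b. c a b \<le> h" and "1 \<le> h"
  shows "mu_winner (Suc n) h c' x"
  unfolding mu_winner_def
proof (intro ballI impI)
  have N': "{1..Suc n} = insert (Suc n) {1..n}" by auto
  fix z assume z: "z \<in> {1..Suc n}" "z \<noteq> x"
  obtain v where "v \<in> {1..n}" "\<forall>u\<in>{1..n}. c u x < c v w"
    using W w unfolding mu_winner_def by blast
  then have below_h: "\<forall>u\<in>{1..n}. c u x < h" using le[of v w] by fastforce
  show "\<exists>y\<in>{1..Suc n}. h < 2 * c' y z \<and> (\<forall>u\<in>{1..Suc n}. c' u x < c' y z)"
  proof (cases "z = Suc n")
    case True
    then have "h < 2 * c' w z" "\<forall>u\<in>{1..Suc n}. c' u x < c' w z"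
      unfolding N' using clone old x w below_h \<open>1 \<le> h\<close> by auto
    then show ?thesis using w by auto
  next
    case False
    then have "z \<in> {1..n} - {x}" using z by auto
    then obtain y where y: "y \<in> {1..n}" "h < 2 * c y z" "\<forall>u\<in>{1..n}. c u x < c y z"
      using W unfolding mu_winner_def by blast
    then have "h < 2 * c' y z" "\<forall>u\<in>{1..Suc n}. c' u x < c' y z"
      unfolding N' using \<open>z \<in> {1..n} - {x}\<close> old clone x w by auto
    then show ?thesis using y(1) by auto
  qed
qed

lemma mu_winner_transpose_add_clone:
  assumes W: "mu_winner n h (\<lambda>a b. c b a) x" and x: "x \<in> {1..n}" and w: "w \<in> {1..n} - {x}"
    and old: "\<forall>a\<in>{1..n}. \<forall>b\<in>{1..n}. c' a b = c a b"
    and clone: "\<forall>b\<in>{1..n}. c' (Suc n) b = c w b" "\<forall>a\<in>{1..n} - {w}. c' a (Suc n) = c a w"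
  shows "mu_winner (Suc n) h (\<lambda>a b. c' b a) x"
  unfolding mu_winner_def
proof (intro ballI impI)
  have N': "{1..Suc n} = insert (Suc n) {1..n}" by auto
  have x_clone: "c' x (Suc n) = c x w" using clone(2) x w by auto
  fix z assume z: "z \<in> {1..Suc n}" "z \<noteq> x"
  define z0 where "z0 = (if z = Suc n then w else z)"
  have "z0 \<in> {1..n} - {x}" using z w by (auto simp: z0_def)
  then obtain y where y: "y \<in> {1..n}" "h < 2 * c z0 y" "\<forall>u\<in>{1..n}. c x u < c z0 y"
    using W unfolding mu_winner_def by blast
  have "c' z y = c z0 y" using z y(1) old clone(1) by (auto simp: z0_def)
  then have "h < 2 * c' z y" "\<forall>u\<in>{1..Suc n}. c' x u < c' z y"
    unfolding N' using y old x w x_clone by auto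
  then show "\<exists>y\<in>{1..Suc n}. h < 2 * c' z y \<and> (\<forall>u\<in>{1..Suc n}. c' x u < c' z y)"
    using y(1) by auto
qed

text \<open>The new alternative \<open>Suc n\<close> is ranked by every voter immediately below \<open>w\<close>.\<close>

definition add_clone :: "nat \<Rightarrow> nat \<Rightarrow> (nat \<Rightarrow> nat \<Rightarrow> nat) \<Rightarrow> nat \<Rightarrow> nat \<Rightarrow> nat" where
  "add_clone n w F = (\<lambda>i a. if a = Suc n then 2 * F i w + 1 else 2 * F i a)"

lemma inj_on_add_clone:
  assumes "inj_on (F i) {1..n}" shows "inj_on (add_clone n w F i) {1..Suc n}"
proof (rule inj_onI)
  fix a b assume ab: "a \<in> {1..Suc n}" "b \<in> {1..Suc n}" "add_clone n w F i a = add_clone n w F i b"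
  consider "a = Suc n" "b = Suc n" | "a \<noteq> Suc n" "b \<noteq> Suc n" | "a = Suc n \<longleftrightarrow> b \<noteq> Suc n"
    by blast
  then show "a = b"
  proof cases
    case 2
    then have "F i a = F i b" "a \<in> {1..n}" "b \<in> {1..n}" using ab by (auto simp: add_clone_def)
    then show ?thesis using assms unfolding inj_on_def by blast
  next
    case 3
    then have "odd (add_clone n w F i a) \<noteq> odd (add_clone n w F i b)" by (auto simp: add_clone_def)
    then show ?thesis using ab(3) by simp
  qed simp
qed

lemma rank_votes_add_clone:
  assumes inj: "\<forall>i\<in>{1..h}. inj_on (F i) {1..n}" and w: "w \<in> {1..n}"
  shows "\<forall>a\<in>{1..n}. \<forall>b\<in>{1..n}. rank_votes (add_clone n w F) h a b = rank_votes F h a b"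
    and "\<forall>b\<in>{1..n}. rank_votes (add_clone n w F) h (Suc n) b = rank_votes F h w b"
    and "rank_votes (add_clone n w F) h w (Suc n) = h"
    and "\<forall>a\<in>{1..n} - {w}. rank_votes (add_clone n w F) h a (Suc n) = rank_votes F h a w"
proof -
  let ?F' = "add_clone n w F"
  show "\<forall>a\<in>{1..n}. \<forall>b\<in>{1..n}. rank_votes ?F' h a b = rank_votes F h a b"
    by (simp add: rank_votes_def add_clone_def)
  have "Suc (2 * u) < 2 * v \<longleftrightarrow> u < v" for u v :: nat by arith
  then show "\<forall>b\<in>{1..n}. rank_votes ?F' h (Suc n) b = rank_votes F h w b"
    by (simp add: rank_votes_def add_clone_def)
  have "{i \<in> {1..h}. ?F' i w < ?F' i (Suc n)} = {1..h}" using w by (auto simp: add_clone_def)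
  then show "rank_votes ?F' h w (Suc n) = h" by (simp add: rank_votes_def)
  show "\<forall>a\<in>{1..n} - {w}. rank_votes ?F' h a (Suc n) = rank_votes F h a w"
  proof
    fix a assume a: "a \<in> {1..n} - {w}"
    have "{i \<in> {1..h}. ?F' i a < ?F' i (Suc n)} = {i \<in> {1..h}. F i a < F i w}"
    proof (intro Collect_cong conj_cong refl)
      fix i assume "i \<in> {1..h}"
      then have "F i a \<noteq> F i w" using inj a w unfolding inj_on_def by blast
      then show "?F' i a < ?F' i (Suc n) \<longleftrightarrow> F i a < F i w" using a by (auto simp: add_clone_def)
    qed
    then show "rank_votes ?F' h a (Suc n) = rank_votes F h a w" by (simp add: rank_votes_def)
  qed
qed

lemma realizable_add_alternative:
  assumes "realizable n h" "2 \<le> n" "1 \<le> h"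
  shows "realizable (Suc n) h"
proof -
  obtain F x where F: "\<forall>i\<in>{1..h}. inj_on (F i) {1..n}" "x \<in> {1..n}"
    "mu_winner n h (rank_votes F h) x" "mu_winner n h (\<lambda>y z. rank_votes F h z y) x"
    using assms(1) unfolding realizable_def by blast
  define w where "w = (if x = 1 then 2 else 1 :: nat)"
  have w: "w \<in> {1..n} - {x}" using assms(2) by (auto simp: w_def)
  note clone = rank_votes_add_clone[OF F(1), of w]
  have "\<forall>i\<in>{1..h}. inj_on (add_clone n w F i) {1..Suc n}" using F(1) inj_on_add_clone by blast
  moreover have "mu_winner (Suc n) h (rank_votes (add_clone n w F) h) x"
    using mu_winner_add_clone[OF F(3) F(2) w clone(1-3) rank_votes_le assms(3)] w by blast
  moreover have "mu_winner (Suc n) h (\<lambda>y z. rank_votes (add_clone n w F) h z y) x"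
    using mu_winner_transpose_add_clone[OF F(4) F(2) w clone(1,2,4)] w by blast
  ultimately show ?thesis using F(2) unfolding realizable_def by force
qed

lemma rank_votes_0 [simp]: "rank_votes F 0 y z = 0"
  by (simp add: rank_votes_def)

lemma rank_votes_Suc:
  "rank_votes F (Suc h) y z = rank_votes F h y z + (if F (Suc h) y < F (Suc h) z then 1 else 0)"
proof -
  have "{i \<in> {1..Suc h}. F i y < F i z} =
      {i \<in> {1..h}. F i y < F i z} \<union> {i \<in> {Suc h}. F i y < F i z}" by auto
  moreover have "card ({i \<in> {1..h}. F i y < F i z} \<union> {i \<in> {Suc h}. F i y < F i z}) =
      card {i \<in> {1..h}. F i y < F i z} + card {i \<in> {Suc h}. F i y < F i z}"
    by (rule card_Un_disjoint) auto
  moreover have "{i \<in> {Suc h}. F i y < F i z} = (if F (Suc h) y < F (Suc h) z then {Suc h} else {})"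
    by auto
  ultimately show ?thesis by (simp add: rank_votes_def)
qed

lemma rank_votes_numeral:
  "rank_votes F (numeral k) y z =
     rank_votes F (pred_numeral k) y z + (if F (numeral k) y < F (numeral k) z then 1 else 0)"
  by (simp add: numeral_eq_Suc rank_votes_Suc)

lemma atLeastAtMost_Suc_0_numeral: "{Suc 0..numeral k} = insert (numeral k) {Suc 0..pred_numeral k}"
  by (auto simp: numeral_eq_Suc)

definition rank_table :: "nat list list \<Rightarrow> nat \<Rightarrow> nat \<Rightarrow> nat" where
  "rank_table rows i a = rows ! (i - 1) ! (a - 1)"

lemmas rank_table_simps =
  atLeastAtMost_Suc_0_numeral rank_table_def mu_winner_def rank_votes_numeral rank_votes_Suc

lemma realizable_base_cases:
  "realizable 4 6" "realizable 4 8" "realizable 4 9" "realizable 5 4" "realizable 5 7" "realizable 6 5"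
  unfolding realizable_def
  subgoal by (intro exI[of _ "rank_table
        [[1, 4, 2, 3], [4, 1, 2, 3], [4, 3, 1, 2], [2, 4, 3, 1], [3, 1, 4, 2], [1, 2, 3, 4]]"] exI[of _ 2]) (simp add: rank_table_simps)
  subgoal by (intro exI[of _ "rank_table
        [[1, 2, 3, 4], [3, 4, 1, 2], [3, 1, 2, 4], [4, 1, 3, 2], [2, 4, 1, 3], [3, 2, 4, 1],
        [3, 2, 4, 1], [1, 4, 2, 3]]"] exI[of _ 1]) (simp add: rank_table_simps)
  subgoal by (intro exI[of _ "rank_table
        [[1, 2, 3, 4], [4, 3, 1, 2], [1, 3, 2, 4], [2, 3, 4, 1], [1, 2, 3, 4], [3, 2, 4, 1],
        [4, 3, 1, 2], [4, 1, 2, 3], [2, 4, 3, 1]]"] exI[of _ 2]) (simp add: rank_table_simps)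
  subgoal by (intro exI[of _ "rank_table
        [[1, 2, 5, 3, 4], [5, 1, 3, 4, 2], [2, 4, 1, 3, 5], [4, 5, 3, 2, 1]]"] exI[of _ 4])
      (simp add: rank_table_simps)
  subgoal by (intro exI[of _ "rank_table
        [[3, 1, 4, 5, 2], [5, 1, 2, 3, 4], [5, 4, 1, 2, 3], [1, 5, 2, 3, 4], [3, 5, 4, 1, 2],
        [2, 3, 4, 5, 1], [4, 1, 5, 2, 3]]"] exI[of _ 2]) (simp add: rank_table_simps)
  subgoal by (intro exI[of _ "rank_table
        [[6, 4, 3, 2, 5, 1], [2, 3, 6, 5, 1, 4], [3, 4, 1, 6, 2, 5], [1, 5, 4, 3, 6, 2],
        [5, 2, 3, 1, 4, 6]]"] exI[of _ 2]) (simp add: rank_table_simps)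
  done

lemma realizable_4:
  assumes "6 \<le> h" "h \<noteq> 7" shows "realizable 4 h"
  using assms
proof (induction h rule: less_induct)
  case (less h)
  show ?case
  proof (cases "h \<in> {6, 8, 9}")
    case True
    then show ?thesis using realizable_base_cases by auto
  next
    case False
    with less.prems have "realizable 4 (h - 2)" by (intro less.IH) auto
    then have "realizable 4 (h - 2 + 2)" by (rule realizable_add_two_voters)
    moreover have "h - 2 + 2 = h" using less.prems by simp
    ultimately show ?thesis by (simp only:)
  qed
qed

lemma realizable_mono_alternatives:
  assumes "realizable m h" "2 \<le> m" "1 \<le> h" "m \<le> n"
  shows "realizable n h"
  using assms(4)
proof (induction n rule: dec_induct)
  case (step k)
  then show ?case using realizable_add_alternative assms(2,3) by simp
qed (rule assms(1))

lemma realizable_if_not_T1: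
  assumes "2 \<le> n" "2 \<le> h" "(h, n) \<notin> T1"
  shows "realizable n h"
proof -
  have hn: "4 \<le> h" "4 \<le> n" "(h, n) \<notin> {(4, 4), (5, 4), (7, 4), (5, 5)}"
    using assms unfolding T1_def by auto
  consider "h = 4" | "h = 5" | "h = 7" | "6 \<le> h" "h \<noteq> 7" using hn by linarith
  then show ?thesis
  proof cases
    case 1
    then show ?thesis using realizable_mono_alternatives[OF realizable_base_cases(4)] hn by auto
  next
    case 2
    then show ?thesis using realizable_mono_alternatives[OF realizable_base_cases(6)] hn by auto
  next
    case 3
    then show ?thesis using realizable_mono_alternatives[OF realizable_base_cases(5)] hn by auto
  next
    case 4
    then show ?thesis using realizable_mono_alternatives[OF realizable_4] hn by auto
  qed
qed

theorem proposition3: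
  fixes n h :: nat
  assumes "n \<ge> 2" and "h \<ge> 2"
  shows "(\<exists>p x. profile n h p \<and> x \<in> {1..n} \<and>
            Dmu n h (mu n h p) p = {x} \<and>
            Dmu n h (mu n h (rev_profile p)) (rev_profile p) = {x})
         \<longleftrightarrow> (h, n) \<notin> T1"
proof -
  have winner_iff: "Dmu n h (mu n h p) p = {x} \<and> Dmu n h (mu n h (rev_profile p)) (rev_profile p) = {x}
      \<longleftrightarrow> mu_winner n h (votes h p) x \<and> mu_winner n h (votes h (rev_profile p)) x"
    if "profile n h p" "x \<in> {1..n}" for p x
    using Dmu_mu_eq_singleton_iff[OF that(1)] Dmu_mu_eq_singleton_iff[OF profile_rev_profile[OF that(1)]]
      that(2) assms by simp
  show ?thesis
  proof
    assume "\<exists>p x. profile n h p \<and> x \<in> {1..n} \<and>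
      Dmu n h (mu n h p) p = {x} \<and> Dmu n h (mu n h (rev_profile p)) (rev_profile p) = {x}"
    then obtain p x where "profile n h p" "x \<in> {1..n}"
      "mu_winner n h (votes h p) x" "mu_winner n h (votes h (rev_profile p)) x"
      using winner_iff by blast
    from bound_if_mu_winner_both_ways[OF this(1,2) assms(1) this(3,4)] show "(h, n) \<notin> T1"
      by (rule not_T1_if_bound[OF assms])
  next
    assume "(h, n) \<notin> T1"
    with assms have "realizable n h" by (rule realizable_if_not_T1)
    then obtain p x where "profile n h p" "x \<in> {1..n}"
      "mu_winner n h (votes h p) x" "mu_winner n h (votes h (rev_profile p)) x"
      by (rule realizable_imp_profile)
    then show "\<exists>p x. profile n h p \<and> x \<in> {1..n} \<and>
      Dmu n h (mu n h p) p = {x} \<and> Dmu n h (mu n h (rev_profile p)) (rev_profile p) = {x}"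
      using winner_iff by blast
  qed
qed

end
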